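(* Let $n\ge 2$. With respect to the basis $(X,Y_1,\dots,Y_{n-1},Z_1,\dots,Z_{n-1},W)$ of $\mathfrak{ch}^n$ (block decomposition of sizes $1,\ 2n-2,\ 1$), the automorphism group of the Lie algebra $\mathfrak{ch}^n$ is $$\mathrm{Aut}(\mathfrak{ch}^n)=\left\{\begin{pmatrix}1&0&0\\ u&M&0\\ a&v^T&\lambda\end{pmatrix}\ :\ M\in GL(2n-2,\mathbb R),\ M^TJ_{n-1}M=\lambda J_{n-1},\ v\in\mathbb R^{2n-2},\ a,\lambda\in\mathbb R,\ \lambda\neq 0,\ u=\tfrac{1}{2\lambda}MJ_{n-1}v\right\}.$$
   Context: $\mathfrak{ch}^n$ is the $2n$-dimensional real Lie algebra with basis $X,Y_1,\dots,Y_{n-1},Z_1,\dots,Z_{n-1},W$ whose only nonzero brackets (up to antisymmetry) are $[X,Y_i]=\tfrac12 Y_i$, $[X,Z_i]=\tfrac12 Z_i$, $[X,W]=W$, $[Z_j,Y_i]=\delta_{ij}W$ for $i,j\in\{1,\dots,n-1\}$ (it is the Lie algebra of the solvable group $\mathbb R\ltimes H_{2n-1}$ acting simply transitively on complex hyperbolic space $\mathbb{CH}^n$). Linear maps are represented by matrices in this ordered basis (the $k$-th column is the coordinate vector of the image of the $k$-th basis vector). $J_{m}=\begin{pmatrix}0&I_m\\-I_m&0\end{pmatrix}$ with $I_m$ the $m\times m$ identity matrix. *)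

theory Defs
  imports "Jordan_Normal_Form.Matrix"
begin

text \<open>Basis of ch^n indexed by 0..2n-1:
  index 0 = X, index i (1 <= i <= n-1) = Y_i, index (n-1)+i (1 <= i <= n-1) = Z_i,
  index 2n-1 = W.\<close>

text \<open>Structure constants: ch_sc n j k l is the coefficient of basis vector l in [e_j, e_k].\<close>
definition ch_sc :: "nat \<Rightarrow> nat \<Rightarrow> nat \<Rightarrow> nat \<Rightarrow> real" where
  "ch_sc n j k l =
    (if j = 0 \<and> 1 \<le> k \<and> k \<le> 2*n-2 \<and> l = k then 1/2
     else if k = 0 \<and> 1 \<le> j \<and> j \<le> 2*n-2 \<and> l = j then -1/2
     else if j = 0 \<and> k = 2*n-1 \<and> l = 2*n-1 then 1
     else if k = 0 \<and> j = 2*n-1 \<and> l = 2*n-1 then -1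
     else if n \<le> j \<and> j \<le> 2*n-2 \<and> k = j - (n-1) \<and> l = 2*n-1 then 1
     else if n \<le> k \<and> k \<le> 2*n-2 \<and> j = k - (n-1) \<and> l = 2*n-1 then -1
     else 0)"

definition ch_bracket :: "nat \<Rightarrow> real vec \<Rightarrow> real vec \<Rightarrow> real vec" where
  "ch_bracket n x y = vec (2*n) (\<lambda>l. \<Sum>j<2*n. \<Sum>k<2*n. x $ j * y $ k * ch_sc n j k l)"

definition ch_Aut :: "nat \<Rightarrow> real mat set" where
  "ch_Aut n = {A. A \<in> carrier_mat (2*n) (2*n) \<and> invertible_mat A \<and>
      (\<forall>x \<in> carrier_vec (2*n). \<forall>y \<in> carrier_vec (2*n).
         A *\<^sub>v ch_bracket n x y = ch_bracket n (A *\<^sub>v x) (A *\<^sub>v y))}"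

definition Jm :: "nat \<Rightarrow> real mat" where
  "Jm m = four_block_mat (0\<^sub>m m m) (1\<^sub>m m) (- (1\<^sub>m m)) (0\<^sub>m m m)"

text \<open>The 3x3 block matrix with blocks of sizes 1, 2n-2, 1:
  [[1,0,0],[u,M,0],[a,v^T,lambda]].\<close>
definition ch_block :: "nat \<Rightarrow> real vec \<Rightarrow> real mat \<Rightarrow> real \<Rightarrow> real vec \<Rightarrow> real \<Rightarrow> real mat" where
  "ch_block n u M a v lam = mat (2*n) (2*n) (\<lambda>(i,j).
     if i = 0 then (if j = 0 then 1 else 0)
     else if i \<le> 2*n-2 then
       (if j = 0 then u $ (i-1) else if j \<le> 2*n-2 then M $$ (i-1, j-1) else 0)
     else (if j = 0 then a else if j \<le> 2*n-2 then v $ (j-1) else lam))"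

end

(*
  Write a coordinate vector of ch^n as (x_0, x', x_W) with x' in R^(2n-2), and let
  omega(p,q) = p^T J q. The structure constants give the bracket in the closed form
    [x,y] = (0, (x_0 y' - y_0 x')/2, x_0 y_W - x_W y_0 - omega(x',y')).
  The block matrix with entries u, M, a, v, lambda maps (x_0, x', x_W) to
  (x_0, x_0 u + M x', a x_0 + v.x' + lambda x_W), and comparing components shows that it
  respects the bracket as soon as omega(M p, M q) = lambda omega(p,q) and
  omega(u, M z) = v.z/2 for all z; since M^T J M = lambda J makes M J a multiple of the
  inverse of (J M)^T, the second condition is equivalent to u = (1/(2 lambda)) M J v.
  Conversely, the automorphism identity applied to the basis brackets [X,Y_i], [X,Z_i],
  [X,W] and [Z_j,Y_i] forces the first row of A to be (1,0,0), the last column to be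
  lambda e_W (with lambda <> 0 by invertibility) and the two conditions above.
*)
theory Submission
  imports Defs "Jordan_Normal_Form.Determinant"
begin

lemma mult_mat_vec_unit_vec:
  fixes A :: "'a :: semiring_1 mat"
  assumes "A \<in> carrier_mat nr nc" "j < nc"
  shows "A *\<^sub>v unit_vec nc j = col A j"
  using col_mult2[of A nr nc "1\<^sub>m nc" nc j] right_mult_one_mat[OF assms(1)] assms by simp

lemma invertible_mat_left_inverse:
  assumes A: "A \<in> carrier_mat n n" and "invertible_mat A"
  obtains B where "B \<in> carrier_mat n n" "B * A = 1\<^sub>m n"
proof -
  from assms(2) obtain B where AB: "A * B = 1\<^sub>m n" and BA: "B * A = 1\<^sub>m (dim_row B)"
    using A unfolding invertible_mat_def inverts_mat_def by auto
  have "B \<in> carrier_mat n n"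
    using arg_cong[OF AB, of dim_col] arg_cong[OF BA, of dim_col] A by auto
  with BA that show ?thesis by auto
qed

lemma invertible_mat_of_left_inverse:
  fixes A :: "'a :: field mat"
  assumes A: "A \<in> carrier_mat n n" and B: "B \<in> carrier_mat n n" and BA: "B * A = 1\<^sub>m n"
  shows "invertible_mat A"
  using mat_mult_left_right_inverse[OF B A BA] A B BA
  unfolding invertible_mat_def inverts_mat_def by auto

lemma invertible_mat_of_trivial_kernel:
  fixes A :: "'a :: field mat"
  assumes A: "A \<in> carrier_mat n n"
    and ker: "\<And>x. x \<in> carrier_vec n \<Longrightarrow> A *\<^sub>v x = 0\<^sub>v n \<Longrightarrow> x = 0\<^sub>v n"
  shows "invertible_mat A"
proof -
  have "det A \<noteq> 0"
    using det_0_iff_vec_prod_zero[OF A] ker by blast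
  then have "A \<in> Units (ring_mat TYPE('a) n undefined)"
    by (rule det_non_zero_imp_unit[OF A])
  then obtain B where "B \<in> carrier_mat n n" "B * A = 1\<^sub>m n"
    unfolding Units_def ring_mat_def by auto
  then show ?thesis by (rule invertible_mat_of_left_inverse[OF A])
qed

lemma invertible_mat_mult_vec_zero:
  assumes A: "A \<in> carrier_mat n n" and "invertible_mat A"
    and x: "x \<in> carrier_vec n" and Ax: "A *\<^sub>v x = 0\<^sub>v n"
  shows "x = 0\<^sub>v n"
proof -
  obtain B where B: "B \<in> carrier_mat n n" and BA: "B * A = 1\<^sub>m n"
    using invertible_mat_left_inverse[OF assms(1,2)] .
  have "x = (B * A) *\<^sub>v x" using BA x by simp
  also have "\<dots> = B *\<^sub>v (A *\<^sub>v x)" using A B x by (simp add: assoc_mult_mat_vec)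
  finally show ?thesis using Ax B by auto
qed

lemma smult_mat_mult_vec:
  "dim_vec v = dim_col A \<Longrightarrow> (a \<cdot>\<^sub>m A) *\<^sub>v v = a \<cdot>\<^sub>v (A *\<^sub>v (v :: 'a :: comm_ring vec))"
  by (rule eq_vecI) (auto simp: scalar_prod_def sum_distrib_left ac_simps)

lemma smult_smult_mat: "a \<cdot>\<^sub>m (b \<cdot>\<^sub>m A) = (a * b :: 'a :: semigroup_mult) \<cdot>\<^sub>m A"
  by (rule eq_matI) (auto simp: mult.assoc)

lemma one_smult_mat [simp]: "(1 :: 'a :: monoid_mult) \<cdot>\<^sub>m A = A"
  by (rule eq_matI) auto

section \<open>The standard symplectic form\<close>

lemma Jm_carrier: "Jm m \<in> carrier_mat (2*m) (2*m)"
  unfolding Jm_def by (rule carrier_matI) (simp_all add: mult_2)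

lemma dim_Jm [simp]: "dim_row (Jm m) = 2*m" "dim_col (Jm m) = 2*m"
  using Jm_carrier[of m] by auto

lemma Jm_index:
  assumes "i < 2*m" "j < 2*m"
  shows "Jm m $$ (i,j) = (if i < m \<and> j = i + m then 1 else if m \<le> i \<and> i = j + m then -1 else 0)"
  using assms unfolding Jm_def by (subst index_mat_four_block(1)) (auto simp: mult_2)

lemma sum_Jm_row:
  assumes "i < 2*m"
  shows "(\<Sum>r<2*m. Jm m $$ (i,r) * q r) = (if i < m then q (i+m) else - q (i-m))"
proof -
  have "(\<Sum>r<2*m. Jm m $$ (i,r) * q r) = (\<Sum>r<2*m. (if r = i + m then (if i < m then q r else 0) else 0)
     + (if r = i - m then (if m \<le> i then - q r else 0) else 0))"
    using assms by (intro sum.cong) (auto simp: Jm_index)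
  also have "\<dots> = (if i < m then q (i+m) else - q (i-m))"
    using assms by (simp add: sum.distrib sum.delta, linarith)
  finally show ?thesis .
qed

lemma Jm_mult_vec_index:
  assumes "q \<in> carrier_vec (2*m)" "i < 2*m"
  shows "(Jm m *\<^sub>v q) $ i = (if i < m then q $ (i+m) else - q $ (i-m))"
  using assms sum_Jm_row[of i m "\<lambda>r. q $ r"] by (simp add: scalar_prod_def atLeast0LessThan)

lemma Jm_mult_Jm: "Jm m * Jm m = - 1\<^sub>m (2*m)"
proof (rule eq_matI)
  fix i j assume "i < dim_row (- 1\<^sub>m (2*m) :: real mat)" "j < dim_col (- 1\<^sub>m (2*m) :: real mat)"
  then have i: "i < 2*m" and j: "j < 2*m" by auto
  have "(Jm m * Jm m) $$ (i,j) = (\<Sum>r<2*m. Jm m $$ (i,r) * Jm m $$ (r,j))"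
    using i j by (simp add: scalar_prod_def atLeast0LessThan)
  also have "\<dots> = (- 1\<^sub>m (2*m)) $$ (i,j)"
    unfolding sum_Jm_row[OF i] using i j by (auto simp: Jm_index)
  finally show "(Jm m * Jm m) $$ (i,j) = (- 1\<^sub>m (2*m)) $$ (i,j)" .
qed auto

lemma transpose_Jm: "transpose_mat (Jm m) = - Jm m"
  by (rule eq_matI) (auto simp: Jm_index)

definition symp_form :: "nat \<Rightarrow> real vec \<Rightarrow> real vec \<Rightarrow> real" where
  "symp_form m p q = p \<bullet> (Jm m *\<^sub>v q)"

lemma symp_form_expand:
  assumes "q \<in> carrier_vec (2*m)"
  shows "symp_form m p q = (\<Sum>i<m. p $ i * q $ (m+i) - p $ (m+i) * q $ i)"
proof -
  have "symp_form m p q = (\<Sum>i<2*m. p $ i * (if i < m then q $ (i+m) else - q $ (i-m)))"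
    unfolding symp_form_def scalar_prod_def using Jm_mult_vec_index[OF assms]
    by (simp add: atLeast0LessThan del: index_mult_mat_vec)
  also have "\<dots> = (\<Sum>i<m. p $ i * q $ (i+m)) + (\<Sum>i<m. p $ (m+i) * - q $ i)"
    unfolding mult_2 atLeast0LessThan[symmetric] sum.atLeastLessThan_concat[of 0 m "m+m", simplified, symmetric]
    by (simp add: sum.shift_bounds_nat_ivl[of _ 0 m m, simplified] add.commute)
  finally show ?thesis by (simp add: sum_subtractf sum_negf add.commute)
qed

lemma symp_form_antisym:
  assumes "p \<in> carrier_vec (2*m)" "q \<in> carrier_vec (2*m)"
  shows "symp_form m p q = - symp_form m q p"
  using assms by (simp add: symp_form_expand sum_negf[symmetric] algebra_simps)

lemma symp_form_self: "p \<in> carrier_vec (2*m) \<Longrightarrow> symp_form m p p = 0"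
  using symp_form_antisym[of p m p] by simp

lemma symp_form_zero_left [simp]: "symp_form m (0\<^sub>v (2*m)) q = 0"
proof -
  have "Jm m *\<^sub>v q \<in> carrier_vec (2*m)" by (rule carrier_vecI) simp
  then show ?thesis unfolding symp_form_def by (rule scalar_prod_left_zero)
qed

lemma symp_form_zero_right [simp]: "symp_form m p (0\<^sub>v (2*m)) = 0"
proof -
  have "Jm m *\<^sub>v 0\<^sub>v (2*m) = 0\<^sub>v (2*m)" using Jm_carrier[of m] by auto
  then show ?thesis unfolding symp_form_def by (simp add: scalar_prod_def)
qed

lemma symp_form_bilinear:
  assumes "p \<in> carrier_vec (2*m)" "q \<in> carrier_vec (2*m)" "r \<in> carrier_vec (2*m)" "s \<in> carrier_vec (2*m)"
  shows "symp_form m (a \<cdot>\<^sub>v p + q) (b \<cdot>\<^sub>v r + s) =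
    a * b * symp_form m p r + a * symp_form m p s + b * symp_form m q r + symp_form m q s"
  using assms
  by (simp add: symp_form_expand sum_distrib_left sum.distrib[symmetric] algebra_simps)

lemma symp_form_unit_vec:
  assumes "a < 2*m" "b < 2*m"
  shows "symp_form m (unit_vec (2*m) a) (unit_vec (2*m) b) = Jm m $$ (a,b)"
  using assms Jm_carrier[of m] by (simp add: symp_form_def mult_mat_vec_unit_vec)

lemma symp_form_mult_mat_vec:
  assumes M: "M \<in> carrier_mat (2*m) (2*m)" and p: "p \<in> carrier_vec (2*m)" and q: "q \<in> carrier_vec (2*m)"
  shows "symp_form m (M *\<^sub>v p) (M *\<^sub>v q) = p \<bullet> ((transpose_mat M * Jm m * M) *\<^sub>v q)"
proof -
  have J: "Jm m \<in> carrier_mat (2*m) (2*m)" by (rule Jm_carrier)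
  have Mt: "transpose_mat M \<in> carrier_mat (2*m) (2*m)" using M by simp
  let ?w = "Jm m *\<^sub>v (M *\<^sub>v q)"
  have w: "?w \<in> carrier_vec (2*m)" using M q J by simp
  have "symp_form m (M *\<^sub>v p) (M *\<^sub>v q) = ?w \<bullet> (M *\<^sub>v p)"
    unfolding symp_form_def using M p w by (simp add: comm_scalar_prod[of _ "2*m"])
  also have "\<dots> = (transpose_mat M *\<^sub>v ?w) \<bullet> p"
    by (rule transpose_vec_mult_scalar[OF M p w, symmetric])
  also have "\<dots> = p \<bullet> (transpose_mat M *\<^sub>v ?w)"
    using Mt p w by (simp add: comm_scalar_prod[of _ "2*m"])
  also have "transpose_mat M *\<^sub>v ?w = (transpose_mat M * Jm m * M) *\<^sub>v q"
    using assoc_mult_mat_vec[OF mult_carrier_mat[OF Mt J] M q] assoc_mult_mat_vec[OF Mt J, of "M *\<^sub>v q"] M q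
    by simp
  finally show ?thesis .
qed

lemma symp_form_conformal:
  assumes "M \<in> carrier_mat (2*m) (2*m)" "transpose_mat M * Jm m * M = lam \<cdot>\<^sub>m Jm m"
    and "p \<in> carrier_vec (2*m)" "q \<in> carrier_vec (2*m)"
  shows "symp_form m (M *\<^sub>v p) (M *\<^sub>v q) = lam * symp_form m p q"
proof -
  have "symp_form m (M *\<^sub>v p) (M *\<^sub>v q) = p \<bullet> ((lam \<cdot>\<^sub>m Jm m) *\<^sub>v q)"
    using symp_form_mult_mat_vec[OF assms(1,3,4)] unfolding assms(2) .
  then show ?thesis
    using assms(3,4) by (simp add: smult_mat_mult_vec symp_form_def)
qed

lemma symp_form_mult_mat_vec_right:
  assumes M: "M \<in> carrier_mat (2*m) (2*m)" and u: "u \<in> carrier_vec (2*m)" and z: "z \<in> carrier_vec (2*m)"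
  shows "symp_form m u (M *\<^sub>v z) = (transpose_mat (Jm m * M) *\<^sub>v u) \<bullet> z"
proof -
  have J: "Jm m \<in> carrier_mat (2*m) (2*m)" by (rule Jm_carrier)
  have JM: "Jm m * M \<in> carrier_mat (2*m) (2*m)" using J M by simp
  have "symp_form m u (M *\<^sub>v z) = u \<bullet> ((Jm m * M) *\<^sub>v z)"
    unfolding symp_form_def using J M z by simp
  also have "\<dots> = (transpose_mat (Jm m * M) *\<^sub>v u) \<bullet> z"
    by (rule transpose_vec_mult_scalar[OF JM z u, symmetric])
  finally show ?thesis .
qed

section \<open>Conformally symplectic matrices\<close>

lemma transpose_Jm_mult:
  assumes M: "M \<in> carrier_mat (2*m) (2*m)"
  shows "transpose_mat (Jm m * M) = - (transpose_mat M * Jm m)"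
  using transpose_mult[OF Jm_carrier M] M by (simp add: transpose_Jm)

lemma conformal_symplectic_inverse_left:
  assumes M: "M \<in> carrier_mat (2*m) (2*m)" and S: "transpose_mat M * Jm m * M = lam \<cdot>\<^sub>m Jm m"
  shows "transpose_mat (Jm m * M) * (M * Jm m) = lam \<cdot>\<^sub>m 1\<^sub>m (2*m)"
proof -
  have J: "Jm m \<in> carrier_mat (2*m) (2*m)" by (rule Jm_carrier)
  have Mt: "transpose_mat M \<in> carrier_mat (2*m) (2*m)" using M by simp
  have "transpose_mat (Jm m * M) * (M * Jm m) = - ((transpose_mat M * Jm m * M) * Jm m)"
    unfolding transpose_Jm_mult[OF M]
    using Mt J M assoc_mult_mat[OF mult_carrier_mat[OF Mt J] M J] by simp
  also have "\<dots> = lam \<cdot>\<^sub>m 1\<^sub>m (2*m)"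
    unfolding S mult_smult_assoc_mat[OF J J] Jm_mult_Jm by (rule eq_matI) auto
  finally show ?thesis .
qed

lemma conformal_symplectic_inverse_right:
  assumes M: "M \<in> carrier_mat (2*m) (2*m)" and S: "transpose_mat M * Jm m * M = lam \<cdot>\<^sub>m Jm m"
    and lam: "lam \<noteq> 0"
  shows "(M * Jm m) * transpose_mat (Jm m * M) = lam \<cdot>\<^sub>m 1\<^sub>m (2*m)"
proof -
  let ?T = "transpose_mat (Jm m * M)"
  have MJ: "M * Jm m \<in> carrier_mat (2*m) (2*m)" using M Jm_carrier[of m] by simp
  have T: "?T \<in> carrier_mat (2*m) (2*m)" using M Jm_carrier[of m] by simp
  have "((1/lam) \<cdot>\<^sub>m ?T) * (M * Jm m) = 1\<^sub>m (2*m)"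
    using lam by (simp add: mult_smult_assoc_mat[OF T MJ] conformal_symplectic_inverse_left[OF M S] smult_smult_mat)
  then have "(M * Jm m) * ((1/lam) \<cdot>\<^sub>m ?T) = 1\<^sub>m (2*m)"
    by (rule mat_mult_left_right_inverse[OF smult_carrier_mat[OF T] MJ])
  then have inv: "(1/lam) \<cdot>\<^sub>m ((M * Jm m) * ?T) = 1\<^sub>m (2*m)"
    by (simp add: mult_smult_distrib[OF MJ T])
  have "(M * Jm m) * ?T = lam \<cdot>\<^sub>m ((1/lam) \<cdot>\<^sub>m ((M * Jm m) * ?T))"
    using lam by (simp add: smult_smult_mat)
  then show ?thesis unfolding inv .
qed

lemma conformal_symplectic_invertible:
  assumes M: "M \<in> carrier_mat (2*m) (2*m)" and S: "transpose_mat M * Jm m * M = lam \<cdot>\<^sub>m Jm m"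
    and lam: "lam \<noteq> 0"
  shows "invertible_mat M"
proof -
  let ?T = "transpose_mat (Jm m * M)"
  let ?R = "(1/lam) \<cdot>\<^sub>m (Jm m * ?T)"
  have J: "Jm m \<in> carrier_mat (2*m) (2*m)" by (rule Jm_carrier)
  have T: "?T \<in> carrier_mat (2*m) (2*m)" using M J by simp
  have R: "?R \<in> carrier_mat (2*m) (2*m)" using J T by simp
  have "M * ?R = (1/lam) \<cdot>\<^sub>m ((M * Jm m) * ?T)"
    using mult_smult_distrib[OF M mult_carrier_mat[OF J T]] assoc_mult_mat[OF M J T] by simp
  also have "\<dots> = 1\<^sub>m (2*m)"
    using lam by (simp add: conformal_symplectic_inverse_right[OF M S lam] smult_smult_mat)
  finally have "?R * M = 1\<^sub>m (2*m)" by (rule mat_mult_left_right_inverse[OF M R])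
  then show ?thesis by (rule invertible_mat_of_left_inverse[OF M R])
qed

text \<open>By symp_form_mult_mat_vec_right, the left-hand side of the equivalence says
  symp_form m u (M z) = v \<bullet> z / 2 for all z.\<close>

lemma conformal_symplectic_transpose_mult_vec_iff:
  assumes M: "M \<in> carrier_mat (2*m) (2*m)" and S: "transpose_mat M * Jm m * M = lam \<cdot>\<^sub>m Jm m"
    and lam: "lam \<noteq> 0" and u: "u \<in> carrier_vec (2*m)" and v: "v \<in> carrier_vec (2*m)"
  shows "transpose_mat (Jm m * M) *\<^sub>v u = (1/2) \<cdot>\<^sub>v v \<longleftrightarrow> u = (1/(2*lam)) \<cdot>\<^sub>v (M *\<^sub>v (Jm m *\<^sub>v v))"
proof -
  let ?T = "transpose_mat (Jm m * M)"
  have J: "Jm m \<in> carrier_mat (2*m) (2*m)" by (rule Jm_carrier)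
  have T: "?T \<in> carrier_mat (2*m) (2*m)" using M J by simp
  have MJ: "M * Jm m \<in> carrier_mat (2*m) (2*m)" using M J by simp
  have MJv: "M *\<^sub>v (Jm m *\<^sub>v v) = (M * Jm m) *\<^sub>v v" using M J v by simp
  show ?thesis
  proof
    assume Tu: "?T *\<^sub>v u = (1/2) \<cdot>\<^sub>v v"
    have "u = (1/lam) \<cdot>\<^sub>v (((M * Jm m) * ?T) *\<^sub>v u)"
      using lam u by (simp add: conformal_symplectic_inverse_right[OF M S lam] smult_mat_mult_vec smult_smult_assoc)
    also have "\<dots> = (1/lam) \<cdot>\<^sub>v ((M * Jm m) *\<^sub>v ((1/2) \<cdot>\<^sub>v v))"
      using MJ T u by (simp add: Tu[symmetric])
    also have "\<dots> = (1/(2*lam)) \<cdot>\<^sub>v (M *\<^sub>v (Jm m *\<^sub>v v))"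
      using MJ v by (simp add: MJv mult_mat_vec smult_smult_assoc mult.commute)
    finally show "u = (1/(2*lam)) \<cdot>\<^sub>v (M *\<^sub>v (Jm m *\<^sub>v v))" .
  next
    assume "u = (1/(2*lam)) \<cdot>\<^sub>v (M *\<^sub>v (Jm m *\<^sub>v v))"
    then have "?T *\<^sub>v u = (1/(2*lam)) \<cdot>\<^sub>v ((?T * (M * Jm m)) *\<^sub>v v)"
      using T MJ v by (simp add: MJv mult_mat_vec)
    also have "\<dots> = (1/2) \<cdot>\<^sub>v v"
      using lam v by (simp add: conformal_symplectic_inverse_left[OF M S] smult_mat_mult_vec smult_smult_assoc)
    finally show "?T *\<^sub>v u = (1/2) \<cdot>\<^sub>v v" .
  qed
qed

section \<open>The bracket of ch^n in coordinates\<close>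

lemma sum_lessThan_split_ends:
  "(\<Sum>i<2*m+2. f i) = f 0 + (\<Sum>i<2*m. f (Suc i)) + (f (2*m+1) :: 'a :: comm_monoid_add)"
proof -
  have "2*m+2 = Suc (Suc (2*m))" by simp
  then show ?thesis by (simp only:) (subst sum.lessThan_Suc_shift, subst sum.lessThan_Suc, simp add: add.assoc)
qed

lemma sum_lessThan_mid:
  "(\<Sum>j<2*m+2. if 1 \<le> j \<and> j \<le> 2*m then f j else 0) = (\<Sum>a<2*m. f (Suc a) :: 'a :: comm_monoid_add)"
  unfolding sum_lessThan_split_ends by (auto intro: sum.cong)

lemma sum_lessThan_mid2:
  "(\<Sum>j<2*m+2. \<Sum>k<2*m+2. if 1 \<le> j \<and> j \<le> 2*m \<and> 1 \<le> k \<and> k \<le> 2*m then f j k else 0) =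
   (\<Sum>a<2*m. \<Sum>b<2*m. f (Suc a) (Suc b) :: 'a :: comm_monoid_add)"
proof -
  have "(\<Sum>j<2*m+2. \<Sum>k<2*m+2. if 1 \<le> j \<and> j \<le> 2*m \<and> 1 \<le> k \<and> k \<le> 2*m then f j k else 0) =
     (\<Sum>j<2*m+2. if 1 \<le> j \<and> j \<le> 2*m then \<Sum>k<2*m+2. if 1 \<le> k \<and> k \<le> 2*m then f j k else 0 else 0)"
    by (intro sum.cong) auto
  then show ?thesis by (simp only: sum_lessThan_mid)
qed

lemma ch_index_cases:
  assumes "j < 2*m+2"
  obtains "j = 0" | a where "a < 2*m" "j = Suc a" | "j = 2*m+1"
  using assms by (cases j) (auto simp: less_Suc_eq)

lemma ch_sc_Suc:
  "ch_sc (Suc m) j k l =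
    (if j = 0 \<and> 1 \<le> k \<and> k \<le> 2*m \<and> l = k then 1/2
     else if k = 0 \<and> 1 \<le> j \<and> j \<le> 2*m \<and> l = j then -1/2
     else if j = 0 \<and> k = 2*m+1 \<and> l = 2*m+1 then 1
     else if k = 0 \<and> j = 2*m+1 \<and> l = 2*m+1 then -1
     else if m < j \<and> j \<le> 2*m \<and> k = j - m \<and> l = 2*m+1 then 1
     else if m < k \<and> k \<le> 2*m \<and> j = k - m \<and> l = 2*m+1 then -1
     else 0)"
  unfolding ch_sc_def by (simp add: Suc_le_eq)

lemma ch_sc_mid:
  assumes "1 \<le> l" "l \<le> 2*m"
  shows "ch_sc (Suc m) j k l = (if j = 0 \<and> k = l then 1/2 else 0) - (if j = l \<and> k = 0 then 1/2 else 0)"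
  using assms by (auto simp: ch_sc_Suc)

lemma ch_sc_last:
  assumes "j < 2*m+2" "k < 2*m+2"
  shows "ch_sc (Suc m) j k (2*m+1) =
    (if j = 0 \<and> k = 2*m+1 then 1 else 0) - (if j = 2*m+1 \<and> k = 0 then 1 else 0)
    - (if 1 \<le> j \<and> j \<le> 2*m \<and> 1 \<le> k \<and> k \<le> 2*m then Jm m $$ (j-1, k-1) else 0)"
  using assms(2) by (cases rule: ch_index_cases[OF assms(1)]; cases rule: ch_index_cases)
    (auto simp: ch_sc_Suc Jm_index)

definition ch_mid :: "nat \<Rightarrow> real vec \<Rightarrow> real vec" where
  "ch_mid m x = vec (2*m) (\<lambda>i. x $ Suc i)"

lemma ch_mid_carrier [simp]: "ch_mid m x \<in> carrier_vec (2*m)"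
  unfolding ch_mid_def by simp

lemma ch_mid_index [simp]: "i < 2*m \<Longrightarrow> ch_mid m x $ i = x $ Suc i"
  unfolding ch_mid_def by simp

lemma dim_ch_mid [simp]: "dim_vec (ch_mid m x) = 2*m"
  unfolding ch_mid_def by simp

lemma ch_bracket_last:
  "ch_bracket (Suc m) x y $ (2*m+1) =
    x $ 0 * y $ (2*m+1) - x $ (2*m+1) * y $ 0 - symp_form m (ch_mid m x) (ch_mid m y)"
proof -
  have "ch_bracket (Suc m) x y $ (2*m+1) = (\<Sum>j<2*m+2. \<Sum>k<2*m+2. x $ j * y $ k * ch_sc (Suc m) j k (2*m+1))"
    unfolding ch_bracket_def by simp
  also have "\<dots> =
      (\<Sum>j<2*m+2. \<Sum>k<2*m+2. (if k = 2*m+1 then (if j = 0 then x $ 0 * y $ (2*m+1) else 0) else 0)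
         - (if k = 0 then (if j = 2*m+1 then x $ (2*m+1) * y $ 0 else 0) else 0)
         - (if 1 \<le> j \<and> j \<le> 2*m \<and> 1 \<le> k \<and> k \<le> 2*m then x $ j * y $ k * Jm m $$ (j-1, k-1) else 0))"
    by (intro sum.cong refl, subst ch_sc_last) auto
  also have "\<dots> = x $ 0 * y $ (2*m+1) - x $ (2*m+1) * y $ 0
      - (\<Sum>a<2*m. \<Sum>b<2*m. x $ Suc a * y $ Suc b * Jm m $$ (a, b))"
    by (simp only: sum_subtractf sum_lessThan_mid2) (simp add: sum.delta)
  also have "(\<Sum>a<2*m. \<Sum>b<2*m. x $ Suc a * y $ Suc b * Jm m $$ (a, b)) = symp_form m (ch_mid m x) (ch_mid m y)"
  proof -
    have "symp_form m (ch_mid m x) (ch_mid m y) = (\<Sum>a<2*m. x $ Suc a * (\<Sum>b<2*m. Jm m $$ (a,b) * y $ Suc b))"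
      unfolding symp_form_def scalar_prod_def
      by (auto simp: atLeast0LessThan scalar_prod_def intro!: sum.cong)
    then show ?thesis by (simp add: sum_distrib_left ac_simps)
  qed
  finally show ?thesis .
qed

lemma ch_bracket_index:
  assumes l: "l < 2*m+2"
  shows "ch_bracket (Suc m) x y $ l =
    (if l = 0 then 0
     else if l \<le> 2*m then (x $ 0 * y $ l - x $ l * y $ 0) / 2
     else x $ 0 * y $ (2*m+1) - x $ (2*m+1) * y $ 0 - symp_form m (ch_mid m x) (ch_mid m y))"
proof -
  have br: "ch_bracket (Suc m) x y $ l = (\<Sum>j<2*m+2. \<Sum>k<2*m+2. x $ j * y $ k * ch_sc (Suc m) j k l)"
    unfolding ch_bracket_def using l by simp
  consider "l = 0" | "1 \<le> l" "l \<le> 2*m" | "l = 2*m+1" using l by linarith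
  then show ?thesis
  proof cases
    case 1
    then have "\<And>j k. ch_sc (Suc m) j k l = 0" by (simp add: ch_sc_Suc)
    then show ?thesis unfolding br using 1 by simp
  next
    case 2
    have "(\<Sum>j<2*m+2. \<Sum>k<2*m+2. x $ j * y $ k * ch_sc (Suc m) j k l) =
      (\<Sum>j<2*m+2. \<Sum>k<2*m+2. (if k = l then (if j = 0 then x $ 0 * y $ l / 2 else 0) else 0)
         - (if k = 0 then (if j = l then x $ l * y $ 0 / 2 else 0) else 0))"
      using 2 by (intro sum.cong refl) (auto simp: ch_sc_mid)
    also have "\<dots> = (x $ 0 * y $ l - x $ l * y $ 0) / 2"
      using l by (simp add: sum_subtractf sum.delta diff_divide_distrib)
    finally show ?thesis unfolding br using 2 by simp
  next
    case 3
    then show ?thesis using ch_bracket_last[of m x y] by simp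
  qed
qed

lemma dim_ch_bracket [simp]: "dim_vec (ch_bracket (Suc m) x y) = 2*m+2"
  unfolding ch_bracket_def by simp

lemma ch_mid_unit_vec:
  "a < 2*m \<Longrightarrow> ch_mid m (unit_vec (2*m+2) (Suc a)) = unit_vec (2*m) a"
  "ch_mid m (unit_vec (2*m+2) 0) = 0\<^sub>v (2*m)"
  "ch_mid m (unit_vec (2*m+2) (2*m+1)) = 0\<^sub>v (2*m)"
  by (rule eq_vecI; simp)+

lemma ch_bracket_unit_first_mid:
  assumes "b < 2*m"
  shows "ch_bracket (Suc m) (unit_vec (2*m+2) 0) (unit_vec (2*m+2) (Suc b)) = (1/2) \<cdot>\<^sub>v unit_vec (2*m+2) (Suc b)"
proof (rule eq_vecI)
  fix l assume "l < dim_vec ((1/2) \<cdot>\<^sub>v unit_vec (2*m+2) (Suc b) :: real vec)"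
  then have l: "l < 2*m+2" by simp
  show "ch_bracket (Suc m) (unit_vec (2*m+2) 0) (unit_vec (2*m+2) (Suc b)) $ l = ((1/2) \<cdot>\<^sub>v unit_vec (2*m+2) (Suc b)) $ l"
    using assms unfolding ch_bracket_index[OF l] ch_mid_unit_vec(2)
    by (cases rule: ch_index_cases[OF l]) auto
qed simp

lemma ch_bracket_unit_first_last:
  "ch_bracket (Suc m) (unit_vec (2*m+2) 0) (unit_vec (2*m+2) (2*m+1)) = unit_vec (2*m+2) (2*m+1)"
proof (rule eq_vecI)
  fix l assume "l < dim_vec (unit_vec (2*m+2) (2*m+1) :: real vec)"
  then have l: "l < 2*m+2" by simp
  show "ch_bracket (Suc m) (unit_vec (2*m+2) 0) (unit_vec (2*m+2) (2*m+1)) $ l = unit_vec (2*m+2) (2*m+1) $ l"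
    unfolding ch_bracket_index[OF l] ch_mid_unit_vec(2)
    by (cases rule: ch_index_cases[OF l]) auto
qed simp

lemma ch_bracket_unit_mid:
  assumes "a < 2*m" "b < 2*m"
  shows "ch_bracket (Suc m) (unit_vec (2*m+2) (Suc a)) (unit_vec (2*m+2) (Suc b)) =
    (- Jm m $$ (a,b)) \<cdot>\<^sub>v unit_vec (2*m+2) (2*m+1)"
proof (rule eq_vecI)
  fix l assume "l < dim_vec ((- Jm m $$ (a,b)) \<cdot>\<^sub>v unit_vec (2*m+2) (2*m+1))"
  then have l: "l < 2*m+2" by simp
  show "ch_bracket (Suc m) (unit_vec (2*m+2) (Suc a)) (unit_vec (2*m+2) (Suc b)) $ l =
      ((- Jm m $$ (a,b)) \<cdot>\<^sub>v unit_vec (2*m+2) (2*m+1)) $ l"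
    using assms unfolding ch_bracket_index[OF l] ch_mid_unit_vec(1)[OF assms(1)] ch_mid_unit_vec(1)[OF assms(2)]
    by (cases rule: ch_index_cases[OF l]) (auto simp: symp_form_unit_vec)
qed simp

section \<open>Block matrices are automorphisms\<close>

lemma ch_block_index:
  assumes "i < 2*m+2" "j < 2*m+2"
  shows "ch_block (Suc m) u M a v lam $$ (i,j) =
     (if i = 0 then (if j = 0 then 1 else 0)
     else if i \<le> 2*m then
       (if j = 0 then u $ (i-1) else if j \<le> 2*m then M $$ (i-1, j-1) else 0)
     else (if j = 0 then a else if j \<le> 2*m then v $ (j-1) else lam))"
  using assms unfolding ch_block_def by simp

lemma ch_block_carrier: "ch_block (Suc m) u M a v lam \<in> carrier_mat (2*m+2) (2*m+2)"
  unfolding ch_block_def by simp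

lemma mult_mat_vec_index_split_ends:
  assumes A: "A \<in> carrier_mat (2*m+2) (2*m+2)" and x: "x \<in> carrier_vec (2*m+2)" and i: "i < 2*m+2"
  shows "(A *\<^sub>v x) $ i =
    A $$ (i,0) * x $ 0 + (\<Sum>k<2*m. A $$ (i, Suc k) * x $ Suc k) + A $$ (i, 2*m+1) * x $ (2*m+1)"
proof -
  have "(A *\<^sub>v x) $ i = (\<Sum>k<2*m+2. A $$ (i,k) * x $ k)"
    using A x i by (simp add: scalar_prod_def atLeast0LessThan)
  then show ?thesis by (simp only: sum_lessThan_split_ends)
qed

lemma ch_block_mult_vec:
  assumes M: "M \<in> carrier_mat (2*m) (2*m)" and u: "u \<in> carrier_vec (2*m)"
    and x: "x \<in> carrier_vec (2*m+2)"
  shows "(ch_block (Suc m) u M a v lam *\<^sub>v x) $ 0 = x $ 0"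
    and "ch_mid m (ch_block (Suc m) u M a v lam *\<^sub>v x) = x $ 0 \<cdot>\<^sub>v u + M *\<^sub>v ch_mid m x"
    and "(ch_block (Suc m) u M a v lam *\<^sub>v x) $ (2*m+1) = a * x $ 0 + v \<bullet> ch_mid m x + lam * x $ (2*m+1)"
proof -
  let ?B = "ch_block (Suc m) u M a v lam"
  note split = mult_mat_vec_index_split_ends[OF ch_block_carrier x]
  show "(?B *\<^sub>v x) $ 0 = x $ 0"
    using split[of 0] by (simp add: ch_block_index)
  show "ch_mid m (?B *\<^sub>v x) = x $ 0 \<cdot>\<^sub>v u + M *\<^sub>v ch_mid m x"
  proof (rule eq_vecI)
    fix r assume "r < dim_vec (x $ 0 \<cdot>\<^sub>v u + M *\<^sub>v ch_mid m x)"
    then have r: "r < 2*m" using u M by simp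
    have "(\<Sum>k<2*m. ?B $$ (Suc r, Suc k) * x $ Suc k) = (M *\<^sub>v ch_mid m x) $ r"
      using r M by (auto simp: ch_block_index scalar_prod_def atLeast0LessThan intro!: sum.cong)
    moreover have "(?B *\<^sub>v x) $ Suc r = ?B $$ (Suc r, 0) * x $ 0
        + (\<Sum>k<2*m. ?B $$ (Suc r, Suc k) * x $ Suc k) + ?B $$ (Suc r, 2*m+1) * x $ (2*m+1)"
      by (rule split) (use r in simp)
    ultimately show "ch_mid m (?B *\<^sub>v x) $ r = (x $ 0 \<cdot>\<^sub>v u + M *\<^sub>v ch_mid m x) $ r"
      using r M u by (simp add: ch_block_index)
  qed (use u M in simp)
  have "(\<Sum>k<2*m. ?B $$ (2*m+1, Suc k) * x $ Suc k) = v \<bullet> ch_mid m x"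
    by (auto simp: ch_block_index scalar_prod_def atLeast0LessThan intro!: sum.cong)
  moreover have "(?B *\<^sub>v x) $ (2*m+1) = ?B $$ (2*m+1, 0) * x $ 0
      + (\<Sum>k<2*m. ?B $$ (2*m+1, Suc k) * x $ Suc k) + ?B $$ (2*m+1, 2*m+1) * x $ (2*m+1)"
    by (rule split) simp
  ultimately show "(?B *\<^sub>v x) $ (2*m+1) = a * x $ 0 + v \<bullet> ch_mid m x + lam * x $ (2*m+1)"
    by (simp add: ch_block_index)
qed

lemma ch_vec_eqI:
  assumes "x \<in> carrier_vec (2*m+2)" "y \<in> carrier_vec (2*m+2)"
    and "x $ 0 = y $ 0" "ch_mid m x = ch_mid m y" "x $ (2*m+1) = y $ (2*m+1)"
  shows "x = y"
proof (rule eq_vecI)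
  fix i assume "i < dim_vec y"
  then have i: "i < 2*m+2" using assms(2) by simp
  show "x $ i = y $ i"
  proof (cases rule: ch_index_cases[OF i])
    case (2 c)
    then show ?thesis using arg_cong[OF assms(4), of "\<lambda>w. w $ c"] by simp
  qed (use assms in simp_all)
qed (use assms in simp)

lemma ch_block_invertible:
  assumes M: "M \<in> carrier_mat (2*m) (2*m)" and Minv: "invertible_mat M"
    and u: "u \<in> carrier_vec (2*m)" and v: "v \<in> carrier_vec (2*m)" and lam: "lam \<noteq> 0"
  shows "invertible_mat (ch_block (Suc m) u M a v lam)"
proof (rule invertible_mat_of_trivial_kernel[OF ch_block_carrier])
  fix x :: "real vec" assume x: "x \<in> carrier_vec (2*m+2)"
    and Bx: "ch_block (Suc m) u M a v lam *\<^sub>v x = 0\<^sub>v (2*m+2)"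
  note Bx_mid = ch_block_mult_vec[OF M u x, where a=a and v=v and lam=lam]
  have x0: "x $ 0 = 0" using Bx_mid(1) unfolding Bx by simp
  have "M *\<^sub>v ch_mid m x = 0 \<cdot>\<^sub>v u + M *\<^sub>v ch_mid m x"
    by (rule eq_vecI) (use M u in auto)
  also have "\<dots> = ch_mid m (0\<^sub>v (2*m+2))"
    using Bx_mid(2) x0 unfolding Bx by simp
  also have "\<dots> = 0\<^sub>v (2*m)" by (rule eq_vecI) auto
  finally have mid: "ch_mid m x = 0\<^sub>v (2*m)"
    by (rule invertible_mat_mult_vec_zero[OF M Minv ch_mid_carrier])
  have "lam * x $ (2*m+1) = 0" using Bx_mid(3) x0 mid v unfolding Bx by simp
  then have "x $ (2*m+1) = 0" using lam by simp
  then show "x = 0\<^sub>v (2*m+2)"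
    by (intro ch_vec_eqI[of x m]) (use x x0 mid in auto)
qed

lemma ch_bracket_first: "ch_bracket (Suc m) x y $ 0 = 0"
  using ch_bracket_index[of 0 m x y] by simp

lemma ch_mid_bracket:
  "ch_mid m (ch_bracket (Suc m) x y) = (1/2) \<cdot>\<^sub>v (x $ 0 \<cdot>\<^sub>v ch_mid m y - y $ 0 \<cdot>\<^sub>v ch_mid m x)"
proof (rule eq_vecI)
  fix r assume "r < dim_vec ((1/2) \<cdot>\<^sub>v (x $ 0 \<cdot>\<^sub>v ch_mid m y - y $ 0 \<cdot>\<^sub>v ch_mid m x))"
  then have r: "r < 2*m" by simp
  then have "Suc r < 2*m+2" by simp
  from ch_bracket_index[OF this, of x y] r
  show "ch_mid m (ch_bracket (Suc m) x y) $ r = ((1/2) \<cdot>\<^sub>v (x $ 0 \<cdot>\<^sub>v ch_mid m y - y $ 0 \<cdot>\<^sub>v ch_mid m x)) $ r"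
    by (simp add: algebra_simps)
qed simp

lemma ch_block_symp_form:
  assumes M: "M \<in> carrier_mat (2*m) (2*m)" and S: "transpose_mat M * Jm m * M = lam \<cdot>\<^sub>m Jm m"
    and v: "v \<in> carrier_vec (2*m)" and lam: "lam \<noteq> 0"
    and u_def: "u = (1/(2*lam)) \<cdot>\<^sub>v (M *\<^sub>v (Jm m *\<^sub>v v))"
    and p: "p \<in> carrier_vec (2*m)" and q: "q \<in> carrier_vec (2*m)"
  shows "symp_form m (s \<cdot>\<^sub>v u + M *\<^sub>v p) (t \<cdot>\<^sub>v u + M *\<^sub>v q) =
    (s * (v \<bullet> q) - t * (v \<bullet> p)) / 2 + lam * symp_form m p q"
proof -
  have u: "u \<in> carrier_vec (2*m)" unfolding u_def using M v Jm_carrier[of m] by simp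
  have Mp: "M *\<^sub>v p \<in> carrier_vec (2*m)" and Mq: "M *\<^sub>v q \<in> carrier_vec (2*m)" using M p q by simp_all
  have "transpose_mat (Jm m * M) *\<^sub>v u = (1/2) \<cdot>\<^sub>v v"
    using conformal_symplectic_transpose_mult_vec_iff[OF M S lam u v] u_def by simp
  then have symp_u: "symp_form m u (M *\<^sub>v z) = (v \<bullet> z) / 2" if z: "z \<in> carrier_vec (2*m)" for z
    using symp_form_mult_mat_vec_right[OF M u z] v z by simp
  have "symp_form m (s \<cdot>\<^sub>v u + M *\<^sub>v p) (t \<cdot>\<^sub>v u + M *\<^sub>v q) =
      s * t * symp_form m u u + s * symp_form m u (M *\<^sub>v q)
      + t * symp_form m (M *\<^sub>v p) u + symp_form m (M *\<^sub>v p) (M *\<^sub>v q)"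
    by (rule symp_form_bilinear[OF u Mp u Mq])
  also have "\<dots> = (s * (v \<bullet> q) - t * (v \<bullet> p)) / 2 + lam * symp_form m p q"
    unfolding symp_form_self[OF u] symp_form_antisym[OF Mp u] symp_u[OF p] symp_u[OF q]
      symp_form_conformal[OF M S p q]
    by (simp add: field_simps)
  finally show ?thesis .
qed

lemma ch_block_preserves_bracket:
  assumes M: "M \<in> carrier_mat (2*m) (2*m)" and S: "transpose_mat M * Jm m * M = lam \<cdot>\<^sub>m Jm m"
    and v: "v \<in> carrier_vec (2*m)" and lam: "lam \<noteq> 0"
    and u_def: "u = (1/(2*lam)) \<cdot>\<^sub>v (M *\<^sub>v (Jm m *\<^sub>v v))"
    and x: "x \<in> carrier_vec (2*m+2)" and y: "y \<in> carrier_vec (2*m+2)"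
  shows "ch_block (Suc m) u M a v lam *\<^sub>v ch_bracket (Suc m) x y =
    ch_bracket (Suc m) (ch_block (Suc m) u M a v lam *\<^sub>v x) (ch_block (Suc m) u M a v lam *\<^sub>v y)"
proof -
  let ?B = "ch_block (Suc m) u M a v lam"
  let ?x = "ch_mid m x" and ?y = "ch_mid m y"
  have u: "u \<in> carrier_vec (2*m)" unfolding u_def using M v Jm_carrier[of m] by simp
  have xy: "ch_bracket (Suc m) x y \<in> carrier_vec (2*m+2)" by (rule carrier_vecI) simp
  note B = ch_block_mult_vec[OF M u, where a=a and v=v and lam=lam]
  note W = ch_block_symp_form[OF M S v lam u_def ch_mid_carrier ch_mid_carrier]
  show ?thesis
  proof (rule ch_vec_eqI[OF _ _ _ _ _])
    show "?B *\<^sub>v ch_bracket (Suc m) x y \<in> carrier_vec (2*m+2)"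
      by (rule mult_mat_vec_carrier[OF ch_block_carrier xy])
    show "ch_bracket (Suc m) (?B *\<^sub>v x) (?B *\<^sub>v y) \<in> carrier_vec (2*m+2)" by (rule carrier_vecI) simp
    show "(?B *\<^sub>v ch_bracket (Suc m) x y) $ 0 = ch_bracket (Suc m) (?B *\<^sub>v x) (?B *\<^sub>v y) $ 0"
      unfolding B(1)[OF xy] ch_bracket_first ..
    show "ch_mid m (?B *\<^sub>v ch_bracket (Suc m) x y) = ch_mid m (ch_bracket (Suc m) (?B *\<^sub>v x) (?B *\<^sub>v y))"
    proof -
      have "M *\<^sub>v ((1/2) \<cdot>\<^sub>v (x $ 0 \<cdot>\<^sub>v ?y - y $ 0 \<cdot>\<^sub>v ?x)) =
          (1/2) \<cdot>\<^sub>v (x $ 0 \<cdot>\<^sub>v (M *\<^sub>v ?y) - y $ 0 \<cdot>\<^sub>v (M *\<^sub>v ?x))"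
        using M by (simp add: mult_mat_vec mult_minus_distrib_mat_vec)
      then show ?thesis
        unfolding B(2)[OF xy] ch_mid_bracket ch_bracket_first B(1)[OF x] B(1)[OF y] B(2)[OF x] B(2)[OF y]
        by (intro eq_vecI) (use M u in \<open>auto simp: algebra_simps\<close>)
    qed
    show "(?B *\<^sub>v ch_bracket (Suc m) x y) $ (2*m+1) = ch_bracket (Suc m) (?B *\<^sub>v x) (?B *\<^sub>v y) $ (2*m+1)"
    proof -
      have "v \<bullet> ((1/2) \<cdot>\<^sub>v (x $ 0 \<cdot>\<^sub>v ?y - y $ 0 \<cdot>\<^sub>v ?x)) = (x $ 0 * (v \<bullet> ?y) - y $ 0 * (v \<bullet> ?x)) / 2"
        using v by (simp add: scalar_prod_minus_distrib[OF v])
      then show ?thesis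
        unfolding B(3)[OF xy] ch_mid_bracket ch_bracket_first ch_bracket_last
          B(1)[OF x] B(1)[OF y] B(2)[OF x] B(2)[OF y] B(3)[OF x] B(3)[OF y] W
        by (simp add: field_simps)
    qed
  qed
qed

lemma ch_block_in_ch_Aut:
  assumes M: "M \<in> carrier_mat (2*m) (2*m)" and S: "transpose_mat M * Jm m * M = lam \<cdot>\<^sub>m Jm m"
    and v: "v \<in> carrier_vec (2*m)" and lam: "lam \<noteq> 0"
    and u_def: "u = (1/(2*lam)) \<cdot>\<^sub>v (M *\<^sub>v (Jm m *\<^sub>v v))"
  shows "ch_block (Suc m) u M a v lam \<in> ch_Aut (Suc m)"
proof -
  have u: "u \<in> carrier_vec (2*m)" unfolding u_def using M v Jm_carrier[of m] by simp
  have "invertible_mat (ch_block (Suc m) u M a v lam)"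
    by (rule ch_block_invertible[OF M conformal_symplectic_invertible[OF M S lam] u v lam])
  then show ?thesis
    unfolding ch_Aut_def using ch_block_carrier[of m u M a v lam]
      ch_block_preserves_bracket[OF M S v lam u_def] by simp
qed

section \<open>Automorphisms are block matrices\<close>

lemma symp_form_col:
  assumes M: "M \<in> carrier_mat (2*m) (2*m)" and a: "a < 2*m" and b: "b < 2*m"
  shows "(transpose_mat M * Jm m * M) $$ (a,b) = symp_form m (col M a) (col M b)"
proof -
  let ?X = "transpose_mat M * Jm m * M"
  have X: "?X \<in> carrier_mat (2*m) (2*m)" using M Jm_carrier[of m] by simp
  have "symp_form m (col M a) (col M b) = symp_form m (M *\<^sub>v unit_vec (2*m) a) (M *\<^sub>v unit_vec (2*m) b)"
    using mult_mat_vec_unit_vec[OF M a] mult_mat_vec_unit_vec[OF M b] by simp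
  also have "\<dots> = unit_vec (2*m) a \<bullet> (?X *\<^sub>v unit_vec (2*m) b)"
    by (rule symp_form_mult_mat_vec[OF M unit_vec_carrier unit_vec_carrier])
  also have "\<dots> = col ?X b $ a"
    unfolding mult_mat_vec_unit_vec[OF X b] by (rule scalar_prod_left_unit[OF col_carrier_vec[OF b X] a])
  also have "\<dots> = ?X $$ (a,b)"
    by (rule index_col) (use carrier_matD[OF X] a b in auto)
  finally show ?thesis by simp
qed

lemma ch_Aut_unit_bracket:
  assumes A: "A \<in> ch_Aut (Suc m)" and j: "j < 2*m+2" and k: "k < 2*m+2"
  shows "A *\<^sub>v ch_bracket (Suc m) (unit_vec (2*m+2) j) (unit_vec (2*m+2) k) = ch_bracket (Suc m) (col A j) (col A k)"
proof -
  have Ac: "A \<in> carrier_mat (2*m+2) (2*m+2)" using A unfolding ch_Aut_def by simp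
  have "\<forall>x\<in>carrier_vec (2*m+2). \<forall>y\<in>carrier_vec (2*m+2).
      A *\<^sub>v ch_bracket (Suc m) x y = ch_bracket (Suc m) (A *\<^sub>v x) (A *\<^sub>v y)"
    using A unfolding ch_Aut_def by simp
  then have "A *\<^sub>v ch_bracket (Suc m) (unit_vec (2*m+2) j) (unit_vec (2*m+2) k) =
      ch_bracket (Suc m) (A *\<^sub>v unit_vec (2*m+2) j) (A *\<^sub>v unit_vec (2*m+2) k)"
    using unit_vec_carrier by blast
  then show ?thesis unfolding mult_mat_vec_unit_vec[OF Ac j] mult_mat_vec_unit_vec[OF Ac k] .
qed

lemma ch_Aut_col_brackets:
  assumes A: "A \<in> ch_Aut (Suc m)"
  shows "b < 2*m \<Longrightarrow> ch_bracket (Suc m) (col A 0) (col A (Suc b)) = (1/2) \<cdot>\<^sub>v col A (Suc b)"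
    and "ch_bracket (Suc m) (col A 0) (col A (2*m+1)) = col A (2*m+1)"
    and "a < 2*m \<Longrightarrow> b < 2*m \<Longrightarrow>
      ch_bracket (Suc m) (col A (Suc a)) (col A (Suc b)) = (- Jm m $$ (a,b)) \<cdot>\<^sub>v col A (2*m+1)"
proof -
  have Ac: "A \<in> carrier_mat (2*m+2) (2*m+2)" using A unfolding ch_Aut_def by simp
  have scaled: "A *\<^sub>v (c \<cdot>\<^sub>v unit_vec (2*m+2) l) = c \<cdot>\<^sub>v col A l" if "l < 2*m+2" for c l
    using mult_mat_vec[OF Ac unit_vec_carrier] mult_mat_vec_unit_vec[OF Ac that] by simp
  show "ch_bracket (Suc m) (col A 0) (col A (Suc b)) = (1/2) \<cdot>\<^sub>v col A (Suc b)" if b: "b < 2*m"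
  proof -
    have "ch_bracket (Suc m) (col A 0) (col A (Suc b)) =
        A *\<^sub>v ch_bracket (Suc m) (unit_vec (2*m+2) 0) (unit_vec (2*m+2) (Suc b))"
      by (rule ch_Aut_unit_bracket[OF A, symmetric]) (use b in simp_all)
    also have "\<dots> = (1/2) \<cdot>\<^sub>v col A (Suc b)"
      unfolding ch_bracket_unit_first_mid[OF b] by (rule scaled) (use b in simp)
    finally show ?thesis .
  qed
  have "ch_bracket (Suc m) (col A 0) (col A (2*m+1)) =
      A *\<^sub>v ch_bracket (Suc m) (unit_vec (2*m+2) 0) (unit_vec (2*m+2) (2*m+1))"
    by (rule ch_Aut_unit_bracket[OF A, symmetric]) simp_all
  also have "\<dots> = col A (2*m+1)"
    unfolding ch_bracket_unit_first_last by (rule mult_mat_vec_unit_vec[OF Ac]) simp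
  finally show "ch_bracket (Suc m) (col A 0) (col A (2*m+1)) = col A (2*m+1)" .
  show "ch_bracket (Suc m) (col A (Suc a)) (col A (Suc b)) = (- Jm m $$ (a,b)) \<cdot>\<^sub>v col A (2*m+1)"
    if a: "a < 2*m" and b: "b < 2*m"
  proof -
    have "ch_bracket (Suc m) (col A (Suc a)) (col A (Suc b)) =
        A *\<^sub>v ch_bracket (Suc m) (unit_vec (2*m+2) (Suc a)) (unit_vec (2*m+2) (Suc b))"
      by (rule ch_Aut_unit_bracket[OF A, symmetric]) (use a b in simp_all)
    also have "\<dots> = (- Jm m $$ (a,b)) \<cdot>\<^sub>v col A (2*m+1)"
      unfolding ch_bracket_unit_mid[OF a b] by (rule scaled) simp
    finally show ?thesis .
  qed
qed

lemma ch_Aut_first_row_last_col: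
  assumes m: "1 \<le> m" and A: "A \<in> ch_Aut (Suc m)"
  shows "b < 2*m \<Longrightarrow> A $$ (0, Suc b) = 0"
    and "A $$ (0, 2*m+1) = 0"
    and "ch_mid m (col A (2*m+1)) = 0\<^sub>v (2*m)"
proof -
  have Ac: "A \<in> carrier_mat (2*m+2) (2*m+2)" using A unfolding ch_Aut_def by simp
  show row: "A $$ (0, Suc b) = 0" if b: "b < 2*m" for b
    using arg_cong[OF ch_Aut_col_brackets(1)[OF A b], of "\<lambda>w. w $ 0"] Ac b
    by (simp add: ch_bracket_first)
  show "A $$ (0, 2*m+1) = 0"
    using arg_cong[OF ch_Aut_col_brackets(2)[OF A], of "\<lambda>w. w $ 0"] Ac
    by (simp add: ch_bracket_first)
  \<comment> \<open>The basis bracket [Z_1, Y_1] = W; this is where n \<ge> 2 is used.\<close>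
  have "Jm m $$ (m, 0) = -1" using m by (simp add: Jm_index)
  then have "ch_bracket (Suc m) (col A (Suc m)) (col A (Suc 0)) = col A (2*m+1)"
    using ch_Aut_col_brackets(3)[OF A, of m 0] m by simp
  then have "ch_mid m (col A (2*m+1)) = ch_mid m (ch_bracket (Suc m) (col A (Suc m)) (col A (Suc 0)))"
    by simp
  also have "\<dots> = (1/2) \<cdot>\<^sub>v (col A (Suc m) $ 0 \<cdot>\<^sub>v ch_mid m (col A (Suc 0))
      - col A (Suc 0) $ 0 \<cdot>\<^sub>v ch_mid m (col A (Suc m)))"
    by (rule ch_mid_bracket)
  also have "\<dots> = 0\<^sub>v (2*m)"
    using row[of m] row[of 0] m Ac by (intro eq_vecI) auto
  finally show "ch_mid m (col A (2*m+1)) = 0\<^sub>v (2*m)" .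
qed

lemma ch_Aut_corners:
  assumes m: "1 \<le> m" and A: "A \<in> ch_Aut (Suc m)"
  shows "A $$ (2*m+1, 2*m+1) \<noteq> 0" and "A $$ (0,0) = 1"
proof -
  have Ac: "A \<in> carrier_mat (2*m+2) (2*m+2)" and Ainv: "invertible_mat A"
    using A unfolding ch_Aut_def by simp_all
  note row0 = ch_Aut_first_row_last_col(2)[OF m A]
  note colW = ch_Aut_first_row_last_col(3)[OF m A]
  show lam: "A $$ (2*m+1, 2*m+1) \<noteq> 0"
  proof
    assume lam0: "A $$ (2*m+1, 2*m+1) = 0"
    have "col A (2*m+1) = 0\<^sub>v (2*m+2)"
    proof (rule ch_vec_eqI[of _ m])
      show "col A (2*m+1) \<in> carrier_vec (2*m+2)" by (rule col_carrier_vec[OF _ Ac]) simp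
      show "ch_mid m (col A (2*m+1)) = ch_mid m (0\<^sub>v (2*m+2))"
        unfolding colW by (rule eq_vecI) simp_all
    qed (use row0 lam0 Ac in simp_all)
    then have "A *\<^sub>v unit_vec (2*m+2) (2*m+1) = 0\<^sub>v (2*m+2)"
      using mult_mat_vec_unit_vec[OF Ac, of "2*m+1"] by simp
    then have "unit_vec (2*m+2) (2*m+1) = (0\<^sub>v (2*m+2) :: real vec)"
      by (rule invertible_mat_mult_vec_zero[OF Ac Ainv unit_vec_carrier])
    then show False by simp
  qed
  show "A $$ (0,0) = 1"
    using arg_cong[OF ch_Aut_col_brackets(2)[OF A], of "\<lambda>w. w $ (2*m+1)"] row0 colW Ac lam
    unfolding ch_bracket_last by simp
qed

lemma ch_Aut_mid_block:
  assumes m: "1 \<le> m" and A: "A \<in> ch_Aut (Suc m)"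
  defines "M \<equiv> mat (2*m) (2*m) (\<lambda>(i,j). A $$ (Suc i, Suc j))" and "lam \<equiv> A $$ (2*m+1, 2*m+1)"
    and "u \<equiv> ch_mid m (col A 0)" and "v \<equiv> vec (2*m) (\<lambda>j. A $$ (2*m+1, Suc j))"
  shows "transpose_mat M * Jm m * M = lam \<cdot>\<^sub>m Jm m"
    and "transpose_mat (Jm m * M) *\<^sub>v u = (1/2) \<cdot>\<^sub>v v"
proof -
  have Ac: "A \<in> carrier_mat (2*m+2) (2*m+2)" using A unfolding ch_Aut_def by simp
  have Mc: "M \<in> carrier_mat (2*m) (2*m)" and vc: "v \<in> carrier_vec (2*m)" and uc: "u \<in> carrier_vec (2*m)"
    unfolding M_def v_def u_def by simp_all
  note row0 = ch_Aut_first_row_last_col(1)[OF m A]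
  note br = ch_Aut_col_brackets[OF A]
  have colM: "col M b = ch_mid m (col A (Suc b))" if "b < 2*m" for b
    using that Ac unfolding M_def by (intro eq_vecI) auto
  show S: "transpose_mat M * Jm m * M = lam \<cdot>\<^sub>m Jm m"
  proof (rule eq_matI)
    fix i j assume "i < dim_row (lam \<cdot>\<^sub>m Jm m)" "j < dim_col (lam \<cdot>\<^sub>m Jm m)"
    then have i: "i < 2*m" and j: "j < 2*m" by simp_all
    show "(transpose_mat M * Jm m * M) $$ (i, j) = (lam \<cdot>\<^sub>m Jm m) $$ (i, j)"
      using arg_cong[OF br(3)[OF i j], of "\<lambda>w. w $ (2*m+1)"] row0[OF i] row0[OF j] Ac i j
      unfolding symp_form_col[OF Mc i j] colM[OF i] colM[OF j] ch_bracket_last lam_def by simp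
  qed (use Mc Jm_carrier[of m] in simp_all)
  show "transpose_mat (Jm m * M) *\<^sub>v u = (1/2) \<cdot>\<^sub>v v"
  proof (rule eq_vecI)
    fix b assume "b < dim_vec ((1/2) \<cdot>\<^sub>v v)"
    then have b: "b < 2*m" using vc by simp
    have "(transpose_mat (Jm m * M) *\<^sub>v u) $ b = (transpose_mat (Jm m * M) *\<^sub>v u) \<bullet> unit_vec (2*m) b"
      using b by simp
    also have "\<dots> = symp_form m u (col M b)"
      unfolding symp_form_mult_mat_vec_right[OF Mc uc unit_vec_carrier, symmetric] mult_mat_vec_unit_vec[OF Mc b] ..
    also have "\<dots> = v $ b / 2"
      using arg_cong[OF br(1)[OF b], of "\<lambda>w. w $ (2*m+1)"] row0[OF b] ch_Aut_corners(2)[OF m A] Ac b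
      unfolding ch_bracket_last colM[OF b] u_def v_def by simp
    finally show "(transpose_mat (Jm m * M) *\<^sub>v u) $ b = ((1/2) \<cdot>\<^sub>v v) $ b"
      using b vc by simp
  qed (use Mc vc Jm_carrier[of m] in simp)
qed

lemma ch_Aut_block_form:
  assumes m: "1 \<le> m" and A: "A \<in> ch_Aut (Suc m)"
  shows "\<exists>u M a v lam. A = ch_block (Suc m) u M a v lam \<and>
    M \<in> carrier_mat (2*m) (2*m) \<and> invertible_mat M \<and>
    transpose_mat M * Jm m * M = lam \<cdot>\<^sub>m Jm m \<and> v \<in> carrier_vec (2*m) \<and> lam \<noteq> 0 \<and>
    u = (1/(2*lam)) \<cdot>\<^sub>v (M *\<^sub>v (Jm m *\<^sub>v v))"
proof -
  have Ac: "A \<in> carrier_mat (2*m+2) (2*m+2)" using A unfolding ch_Aut_def by simp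
  define u where "u = ch_mid m (col A 0)"
  define M where "M = mat (2*m) (2*m) (\<lambda>(i,j). A $$ (Suc i, Suc j))"
  define v where "v = vec (2*m) (\<lambda>j. A $$ (2*m+1, Suc j))"
  define a where "a = A $$ (2*m+1, 0)"
  define lam where "lam = A $$ (2*m+1, 2*m+1)"
  have Mc: "M \<in> carrier_mat (2*m) (2*m)" and vc: "v \<in> carrier_vec (2*m)" and uc: "u \<in> carrier_vec (2*m)"
    unfolding M_def v_def u_def by simp_all
  have lam: "lam \<noteq> 0" unfolding lam_def by (rule ch_Aut_corners(1)[OF m A])
  have S: "transpose_mat M * Jm m * M = lam \<cdot>\<^sub>m Jm m"
    unfolding M_def lam_def by (rule ch_Aut_mid_block(1)[OF m A])
  have "transpose_mat (Jm m * M) *\<^sub>v u = (1/2) \<cdot>\<^sub>v v"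
    unfolding M_def u_def v_def by (rule ch_Aut_mid_block(2)[OF m A])
  then have u: "u = (1/(2*lam)) \<cdot>\<^sub>v (M *\<^sub>v (Jm m *\<^sub>v v))"
    using conformal_symplectic_transpose_mult_vec_iff[OF Mc S lam uc vc] by simp
  have "A = ch_block (Suc m) u M a v lam"
  proof (rule eq_matI)
    fix i j assume "i < dim_row (ch_block (Suc m) u M a v lam)" "j < dim_col (ch_block (Suc m) u M a v lam)"
    then have i: "i < 2*m+2" and j: "j < 2*m+2" using ch_block_carrier[of m u M a v lam] by simp_all
    have midW: "c < 2*m \<Longrightarrow> A $$ (Suc c, 2*m+1) = 0" for c
      using arg_cong[OF ch_Aut_first_row_last_col(3)[OF m A], of "\<lambda>w. w $ c"] Ac by simp
    show "A $$ (i, j) = ch_block (Suc m) u M a v lam $$ (i, j)"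
      unfolding ch_block_index[OF i j]
      by (cases rule: ch_index_cases[OF i]; cases rule: ch_index_cases[OF j])
        (use ch_Aut_corners(2)[OF m A] ch_Aut_first_row_last_col(1,2)[OF m A] midW Ac
          in \<open>simp_all add: u_def M_def v_def a_def lam_def\<close>)
  qed (use Ac ch_block_carrier[of m u M a v lam] in simp_all)
  then show ?thesis
    using Mc conformal_symplectic_invertible[OF Mc S lam] S vc lam u by blast
qed

theorem lemma2p1:
  fixes n :: nat
  assumes "n \<ge> 2"
  shows "ch_Aut n =
    {ch_block n u M a v lam | u M a v lam.
       M \<in> carrier_mat (2*n-2) (2*n-2) \<and> invertible_mat M \<and>
       transpose_mat M * Jm (n-1) * M = lam \<cdot>\<^sub>m Jm (n-1) \<and>
       v \<in> carrier_vec (2*n-2) \<and> lam \<noteq> 0 \<and>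
       u = (1 / (2*lam)) \<cdot>\<^sub>v (M *\<^sub>v (Jm (n-1) *\<^sub>v v))}"
proof -
  obtain m where n: "n = Suc m" and m: "1 \<le> m" using assms by (cases n) auto
  have dims: "2*n-2 = 2*m" "n-1 = m" using n by simp_all
  show ?thesis unfolding dims unfolding n
    using ch_Aut_block_form[OF m] ch_block_in_ch_Aut by blast
qed

end
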